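(* Let $0<a,b<1$, $r>as$, $s>br$. For every $\alpha\in(\rho_1,1)\cap[0,1)$, $\beta\in(\rho_2,1)\cap[0,1)$ and every $x,y>0$, $$V(T_{\alpha,\beta}(x,y))-V(x,y)\le -bx\,\Psi(\alpha,X,r)-ay\,\Psi(\beta,Y,s)\le 0,$$ where $X=r-x-ay$, $Y=s-bx-y$; moreover $V(T_{\alpha,\beta}(x,y))-V(x,y)<0$ for every $(x,y)\ne(p,q)$ with $x,y>0$.
   Context: $p=\frac{r-as}{1-ab}$, $q=\frac{s-br}{1-ab}$. $T_{\alpha,\beta}(x,y)=\big(x[(1-\alpha)e^{r-x-ay}+\alpha],\,y[(1-\beta)e^{s-bx-y}+\beta]\big)$. $V(x,y)=bx^2+ay^2+2abxy-2rbx-2say$. For $u\in\mathbb R$, $\varsigma\in[0,1)$, $t>0$: $\Phi(\varsigma,u,t)=(1-\varsigma)(1-e^u)(t-u)+2u$ and $\Psi(\varsigma,u,t)=(1-\varsigma)(e^u-1)\Phi(\varsigma,u,t)$. $\rho_1=\frac{e^{r-2}-1}{e^{r-2}+1}$, $\rho_2=\frac{e^{s-2}-1}{e^{s-2}+1}$. *)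

theory Defs
  imports Complex_Main
begin

definition eqp :: "real \<Rightarrow> real \<Rightarrow> real \<Rightarrow> real \<Rightarrow> real" where
  "eqp a b r s = (r - a * s) / (1 - a * b)"

definition eqq :: "real \<Rightarrow> real \<Rightarrow> real \<Rightarrow> real \<Rightarrow> real" where
  "eqq a b r s = (s - b * r) / (1 - a * b)"

definition Tmap :: "real \<Rightarrow> real \<Rightarrow> real \<Rightarrow> real \<Rightarrow> real \<Rightarrow> real \<Rightarrow> real \<times> real \<Rightarrow> real \<times> real" where
  "Tmap a b r s \<alpha> \<beta> xy = (case xy of (x, y) \<Rightarrow>
     (x * ((1 - \<alpha>) * exp (r - x - a * y) + \<alpha>),
      y * ((1 - \<beta>) * exp (s - b * x - y) + \<beta>)))"

definition Vfun :: "real \<Rightarrow> real \<Rightarrow> real \<Rightarrow> real \<Rightarrow> real \<times> real \<Rightarrow> real" where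
  "Vfun a b r s xy = (case xy of (x, y) \<Rightarrow>
     b * x^2 + a * y^2 + 2 * a * b * x * y - 2 * r * b * x - 2 * s * a * y)"

definition Phi :: "real \<Rightarrow> real \<Rightarrow> real \<Rightarrow> real" where
  "Phi \<sigma> u t = (1 - \<sigma>) * (1 - exp u) * (t - u) + 2 * u"

definition Psi :: "real \<Rightarrow> real \<Rightarrow> real \<Rightarrow> real" where
  "Psi \<sigma> u t = (1 - \<sigma>) * (exp u - 1) * Phi \<sigma> u t"

definition rho :: "real \<Rightarrow> real" where
  "rho r = (exp (r - 2) - 1) / (exp (r - 2) + 1)"

end

theory Submission
  imports Defs
begin

text \<open>Writing \<open>X = r - x - a y\<close>, \<open>Y = s - b x - y\<close>, the decrease of \<open>V\<close> along one step of
  \<open>T\<close> is an exact identity: \<open>-b x \<Psi>(\<alpha>,X,r) - a y \<Psi>(\<beta>,Y,s)\<close> minus a nonnegative square.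
  It remains to see that \<open>\<Psi>(\<sigma>,u,t) > 0\<close> for \<open>u < t\<close>, \<open>u \<noteq> 0\<close>: with \<open>w = e\<^sup>u - 1\<close>,
  \<open>\<Psi> = (1-\<sigma>) w (2u - (1-\<sigma>) w (t-u))\<close>, and the monotonicity of
  \<open>u (exp(t-2) + 1) - w (t-u)\<close> bounds \<open>u w (t-u)\<close> by \<open>u\<^sup>2 (exp(t-2) + 1)\<close>, which is small
  enough exactly when \<open>\<sigma> > \<rho>(t)\<close>. The second coordinate vanishes only at the interior
  equilibrium \<open>(p,q)\<close>, where \<open>X = Y = 0\<close>.\<close>

lemma Vfun_Tmap_diff:
  fixes a b r s \<alpha> \<beta> x y :: real
  defines "X \<equiv> r - x - a * y" and "Y \<equiv> s - b * x - y"
  shows "Vfun a b r s (Tmap a b r s \<alpha> \<beta> (x, y)) - Vfun a b r s (x, y)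
    = - b * x * Psi \<alpha> X r - a * y * Psi \<beta> Y s
      - a * b * x * y * ((1 - \<alpha>) * (exp X - 1) - (1 - \<beta>) * (exp Y - 1))\<^sup>2"
  unfolding Vfun_def Tmap_def Psi_def Phi_def X_def Y_def
  by (simp add: power2_eq_square) algebra

lemma mult_exp_minus_one_le_square:
  fixes t u :: real
  shows "u * (exp u - 1) * (t - u) \<le> u\<^sup>2 * (exp (t - 2) + 1)"
proof -
  define g where "g v = v * (exp (t - 2) + 1) - (exp v - 1) * (t - v)" for v
  have deriv: "(g has_real_derivative exp (t - 2) + exp v * (1 - t + v)) (at v)" for v
    unfolding g_def by (auto intro!: derivative_eq_intros simp: algebra_simps)
  have deriv_nonneg: "0 \<le> exp (t - 2) + exp v * (1 - t + v)" for v
  proof -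
    have "exp v * (1 + (t - 2 - v)) \<le> exp v * exp (t - 2 - v)"
      using exp_ge_add_one_self[of "t - 2 - v"] by simp
    also have "\<dots> = exp (t - 2)"
      by (simp flip: exp_add)
    finally show ?thesis
      by (simp add: algebra_simps)
  qed
  have g_mono: "g v \<le> g w" if "v \<le> w" for v w
    using DERIV_nonneg_imp_nondecreasing[OF that] deriv deriv_nonneg by blast
  have "g 0 = 0"
    by (simp add: g_def)
  then have "0 \<le> u * g u"
    using g_mono[of 0 u] g_mono[of u 0] by (cases "0 \<le> u") (auto simp: mult_nonpos_nonpos)
  then show ?thesis
    by (simp add: g_def power2_eq_square algebra_simps)
qed

lemma rho_less_iff:
  fixes t \<sigma> :: real
  shows "rho t < \<sigma> \<longleftrightarrow> (1 - \<sigma>) * (exp (t - 2) + 1) < 2"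
proof -
  have "0 < exp (t - 2) + 1"
    by (simp add: add_pos_pos)
  then show ?thesis
    unfolding rho_def by (simp add: field_simps)
qed

lemma Psi_pos:
  fixes \<sigma> u t :: real
  assumes "rho t < \<sigma>" "\<sigma> < 1" "u < t" "u \<noteq> 0"
  shows "0 < Psi \<sigma> u t"
proof -
  define k w c where "k = 1 - \<sigma>" and "w = exp u - 1" and "c = exp (t - 2) + 1"
  have "0 < k"
    using assms(2) by (simp add: k_def)
  have kc: "k * c < 2"
    using assms(1) by (simp add: rho_less_iff k_def c_def)
  have uw: "0 < u * w"
    using assms(4) by (cases "0 < u") (auto simp: w_def mult_neg_neg)
  have bound: "u * w * (t - u) \<le> u\<^sup>2 * c"
    using mult_exp_minus_one_le_square[of u t] by (simp add: w_def c_def)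
  have "k * w\<^sup>2 * (u * w * (t - u)) \<le> k * w\<^sup>2 * (u\<^sup>2 * c)"
    using bound \<open>0 < k\<close> by (intro mult_left_mono) auto
  also have "\<dots> = (k * c) * (u * w)\<^sup>2"
    by (simp add: power2_eq_square)
  also have "\<dots> < 2 * (u * w)\<^sup>2"
    using kc uw by (intro mult_strict_right_mono) auto
  finally have "(u * w) * (k * w * (w * (t - u))) < (u * w) * (2 * u * w)"
    by (simp add: power2_eq_square algebra_simps)
  then have "k * w * (w * (t - u)) < 2 * u * w"
    using uw by (simp only: mult_less_cancel_left_pos)
  then have "0 < k * (2 * u * w - k * w * (w * (t - u)))"
    using \<open>0 < k\<close> by simp
  then show ?thesis
    by (simp add: Psi_def Phi_def k_def w_def algebra_simps)
qed

lemma Psi_nonneg: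
  fixes \<sigma> u t :: real
  assumes "rho t < \<sigma>" "\<sigma> < 1" "u < t"
  shows "0 \<le> Psi \<sigma> u t"
  using Psi_pos[OF assms] by (cases "u = 0") (auto simp: Psi_def)

lemma equilibrium_unique:
  fixes a b r s x y :: real
  assumes "a * b \<noteq> 1" "r - x - a * y = 0" "s - b * x - y = 0"
  shows "(x, y) = (eqp a b r s, eqq a b r s)"
proof -
  have "x * (1 - a * b) = r - a * s" "y * (1 - a * b) = s - b * r"
    using assms(2,3) by (simp_all add: algebra_simps)
  with assms(1) show ?thesis
    by (simp add: eqp_def eqq_def field_simps)
qed

theorem mainTheorem8:
  fixes a b r s \<alpha> \<beta> :: real
  assumes "0 < a" "a < 1" "0 < b" "b < 1" "r > a * s" "s > b * r"
    and "rho r < \<alpha>" "0 \<le> \<alpha>" "\<alpha> < 1"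
    and "rho s < \<beta>" "0 \<le> \<beta>" "\<beta> < 1"
  shows "(\<forall>x y. x > 0 \<longrightarrow> y > 0 \<longrightarrow>
           Vfun a b r s (Tmap a b r s \<alpha> \<beta> (x, y)) - Vfun a b r s (x, y)
             \<le> - b * x * Psi \<alpha> (r - x - a * y) r - a * y * Psi \<beta> (s - b * x - y) s
         \<and> - b * x * Psi \<alpha> (r - x - a * y) r - a * y * Psi \<beta> (s - b * x - y) s \<le> 0)
       \<and> (\<forall>x y. x > 0 \<longrightarrow> y > 0 \<longrightarrow> (x, y) \<noteq> (eqp a b r s, eqq a b r s) \<longrightarrow>
           Vfun a b r s (Tmap a b r s \<alpha> \<beta> (x, y)) - Vfun a b r s (x, y) < 0)"
proof (intro conjI allI impI)
  fix x y :: real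
  assume xy: "0 < x" "0 < y"
  define X Y where "X = r - x - a * y" and "Y = s - b * x - y"
  have "X < r" "Y < s"
    using xy mult_pos_pos[OF assms(1) xy(2)] mult_pos_pos[OF assms(3) xy(1)]
    by (simp_all add: X_def Y_def)
  then have Psi_X: "0 \<le> Psi \<alpha> X r" and Psi_Y: "0 \<le> Psi \<beta> Y s"
    using assms Psi_nonneg by auto
  have square_nonneg: "0 \<le> a * b * x * y * ((1 - \<alpha>) * (exp X - 1) - (1 - \<beta>) * (exp Y - 1))\<^sup>2"
    using xy assms(1,3) by simp
  then show "Vfun a b r s (Tmap a b r s \<alpha> \<beta> (x, y)) - Vfun a b r s (x, y)
      \<le> - b * x * Psi \<alpha> (r - x - a * y) r - a * y * Psi \<beta> (s - b * x - y) s"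
    using Vfun_Tmap_diff[of a b r s \<alpha> \<beta> x y] by (simp add: X_def Y_def)
  have "0 \<le> b * x * Psi \<alpha> X r" "0 \<le> a * y * Psi \<beta> Y s"
    using Psi_X Psi_Y xy assms(1,3) by simp_all
  then show "- b * x * Psi \<alpha> (r - x - a * y) r - a * y * Psi \<beta> (s - b * x - y) s \<le> 0"
    by (simp add: X_def Y_def)
  assume "(x, y) \<noteq> (eqp a b r s, eqq a b r s)"
  moreover have "a * b < 1"
    using assms(1-4) mult_strict_mono[of a 1 b 1] by simp
  ultimately have "X \<noteq> 0 \<or> Y \<noteq> 0"
    using equilibrium_unique[of a b r x y s] by (auto simp: X_def Y_def)
  then have "0 < Psi \<alpha> X r \<or> 0 < Psi \<beta> Y s"
    using \<open>X < r\<close> \<open>Y < s\<close> assms Psi_pos by blast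
  then have "0 < b * x * Psi \<alpha> X r + a * y * Psi \<beta> Y s"
    using Psi_X Psi_Y xy assms(1,3)
    by (auto intro: add_pos_nonneg add_nonneg_pos)
  with square_nonneg show "Vfun a b r s (Tmap a b r s \<alpha> \<beta> (x, y)) - Vfun a b r s (x, y) < 0"
    using Vfun_Tmap_diff[of a b r s \<alpha> \<beta> x y] by (simp add: X_def Y_def)
qed

end
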